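(* Let $A$ be a finite alphabet, let $d: A^n \to A$ be a block map and fix $x_1 \cdots x_{n-1} \in A^{n-1}$. If $d$ is weakly progressive, then the restriction \[\tau_d: Z(x_1 \cdots x_{n-1}) \to \bigcup_{a \in A} Z(d(x_1 \cdots x_{n-1} a))\] is (well defined and) bijective.
   Context: $A$ is a finite set with the discrete topology; $\mathbb{N}=\{1,2,3,\dots\}$; $A^{\mathbb{N}}$ is the space of one-sided infinite sequences over $A$ with the product topology; $A^k$ is the set of words of length $k$. For a word $\mu$, the cylinder set is $Z(\mu)=\{x\in A^{\mathbb{N}} : x_1\cdots x_{|\mu|}=\mu\}$ (for the empty word this is $A^{\mathbb{N}}$). A block map is a function $d: A^n \to A$, and $\tau_d: A^{\mathbb{N}}\to A^{\mathbb{N}}$ is defined by $\tau_d(x)_i = d(x_i \cdots x_{i+n-1})$. For $w=w_1\cdots w_{n-1}\in A^{n-1}$ and $m\in\mathbb{N}$, define $p_{d,m}^{w}: A^m\to A^m$ by letting, for $\beta\in A^m$, the $j$-th letter ($1\le j\le m$) of $p_{d,m}^{w}(\beta)$ be $d$ applied to the subword of length $n$ starting at position $j$ of the concatenated word $w\beta$ (so $p_{d,m}^{w}(a\alpha)=d(w_1\cdots w_{n-1}a)\,d(w_2\cdots w_{n-1}a\alpha_1)\cdots$). The block map $d$ is weakly progressive of order $m$ if for every $\mu \in A^n$ and every $\nu \in A^m$ with $d(\mu)= \nu_1$ there exists a unique $a \in A$ such that the equation $p_{d,m}^{\mu_1 \cdots \mu_{n-1}}(a \alpha)=\nu$ has a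 solution $\alpha \in A^{m-1}$. The block map $d$ is weakly progressive if it is weakly progressive of order $m$ for some $m\in\mathbb{N}$. *)

theory Defs
  imports Main
begin

(* Alphabet A = the finite type 'a.  Words are lists; A^k = lists of length k.
   Points of A^N are functions nat => 'a, where position i (1-based in the paper)
   is stored at index i-1. *)

definition cylinder :: "'a list \<Rightarrow> (nat \<Rightarrow> 'a) set" where
  "cylinder \<mu> = {x. \<forall>i < length \<mu>. x i = \<mu> ! i}"

definition tau :: "('a list \<Rightarrow> 'a) \<Rightarrow> nat \<Rightarrow> (nat \<Rightarrow> 'a) \<Rightarrow> (nat \<Rightarrow> 'a)" where
  "tau d n x = (\<lambda>i. d (map x [i..<i + n]))"

definition pmap :: "('a list \<Rightarrow> 'a) \<Rightarrow> nat \<Rightarrow> nat \<Rightarrow> 'a list \<Rightarrow> 'a list \<Rightarrow> 'a list" where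
  "pmap d n m w \<beta> = map (\<lambda>j. d (take n (drop j (w @ \<beta>)))) [0..<m]"

definition weakly_progressive_of_order ::
  "('a list \<Rightarrow> 'a) \<Rightarrow> nat \<Rightarrow> nat \<Rightarrow> bool" where
  "weakly_progressive_of_order d n m \<longleftrightarrow>
     (\<forall>\<mu> \<nu>. length \<mu> = n \<longrightarrow> length \<nu> = m \<longrightarrow> d \<mu> = \<nu> ! 0 \<longrightarrow>
        (\<exists>!a. \<exists>\<alpha>. length \<alpha> = m - 1 \<and> pmap d n m (take (n - 1) \<mu>) (a # \<alpha>) = \<nu>))"

definition weakly_progressive :: "('a list \<Rightarrow> 'a) \<Rightarrow> nat \<Rightarrow> bool" where
  "weakly_progressive d n \<longleftrightarrow> (\<exists>m \<ge> 1. weakly_progressive_of_order d n m)"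

end

theory Submission
  imports Defs
begin

text \<open>For a point x, the letters x_s, ..., x_(s+n-2) together with the next m letters
  and the m values of tau x starting at s form exactly an instance of the equation
  p^u_(d,m)(a \<alpha>) = \<nu> in the definition of weak progressivity, with u the window and a = x_(s+n-1).
  Uniqueness of a therefore determines a preimage letter by letter from its prefix
  (injectivity), while existence of a for every \<nu> allows one to choose the next letter of a
  preimage so that the following window can still be continued (surjectivity). For order 1
  this lookahead is empty; instead uniqueness makes a \<mapsto> d (u @ [a]) injective, hence
  surjective on the finite alphabet.\<close>

lemma tau_eq_window:
  assumes "n \<ge> 1"
  shows "tau d n x s = d (map x [s..<s + n - 1] @ [x (s + n - 1)])"
proof -
  have "[s..<s + n] = [s..<s + n - 1] @ [s + n - 1]"
    using assms upt_Suc_append[of s "s + n - 1"] by simp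
  then show ?thesis by (simp add: tau_def)
qed

lemma pmap_window_eq_tau:
  assumes "n \<ge> 1"
  shows "pmap d n m (map x [s..<s + n - 1]) (map x [s + n - 1..<s + n - 1 + m])
           = map (tau d n x) [s..<s + m]"
proof -
  have "[s..<s + n - 1 + m] = [s..<s + n - 1] @ [s + n - 1..<s + n - 1 + m]"
    by (rule upt_add_eq_append) (use assms in simp)
  then have "map x [s..<s + n - 1] @ map x [s + n - 1..<s + n - 1 + m] = map x [s..<s + n - 1 + m]"
    by simp
  moreover have "take n (drop j (map x [s..<s + n - 1 + m])) = map x [s + j..<s + j + n]"
    if "j < m" for j
    using that assms by (simp add: take_map drop_map take_upt drop_upt)
  ultimately show ?thesis
    by (auto simp: pmap_def tau_def intro!: nth_equalityI)
qed

lemma length_pmap [simp]: "length (pmap d n m w \<beta>) = m"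
  by (simp add: pmap_def)

lemma pmap_nth_0:
  assumes "m \<ge> 1" "n \<ge> 1" "length u = n - 1"
  shows "pmap d n m u (a # \<alpha>) ! 0 = d (u @ [a])"
  using assms by (simp add: pmap_def)

lemma pmap_nth_1:
  assumes "m \<ge> 2" "n \<ge> 1" "length u = n - 1"
  shows "pmap d n m u (a # b # \<alpha>) ! 1 = d (tl (u @ [a]) @ [b])"
proof -
  have "pmap d n m u (a # b # \<alpha>) ! 1 = d (take n (drop 1 (u @ a # b # \<alpha>)))"
    using assms by (simp add: pmap_def)
  also have "drop 1 (u @ a # b # \<alpha>) = tl (u @ [a]) @ b # \<alpha>"
    by (cases u) simp_all
  also have "take n (tl (u @ [a]) @ b # \<alpha>) = tl (u @ [a]) @ [b]"
    using assms by (simp add: take_append)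
  finally show ?thesis .
qed

lemma weakly_progressive_leading_letter_unique:
  assumes wp: "weakly_progressive_of_order d n m" and "m \<ge> 1" "n \<ge> 1" "length u = n - 1"
    and "length \<alpha> = m - 1" "length \<alpha>' = m - 1"
    and eq: "pmap d n m u (a # \<alpha>) = pmap d n m u (a' # \<alpha>')"
  shows "a = a'"
proof -
  let ?solvable = "\<lambda>b. \<exists>\<beta>. length \<beta> = m - 1 \<and> pmap d n m u (b # \<beta>) = pmap d n m u (a # \<alpha>)"
  have "\<exists>!b. ?solvable b"
    using wp[unfolded weakly_progressive_of_order_def, rule_format,
        of "u @ [a]" "pmap d n m u (a # \<alpha>)"] pmap_nth_0[OF assms(2-4)] assms(3,4)
    by simp
  moreover have "?solvable a" "?solvable a'"
    using assms(5,6) eq by metis+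
  ultimately show ?thesis
    by (metis the1_equality)
qed

lemma weakly_progressive_order_1_surj:
  fixes d :: "'a::finite list \<Rightarrow> 'a"
  assumes wp: "weakly_progressive_of_order d n 1" and "n \<ge> 1" "length u = n - 1"
  shows "surj (\<lambda>a. d (u @ [a]))"
proof -
  have "inj (\<lambda>a. d (u @ [a]))"
  proof (rule injI)
    fix a a' assume "d (u @ [a]) = d (u @ [a'])"
    then have "pmap d n 1 u [a] = pmap d n 1 u [a']"
      using assms by (simp add: pmap_def)
    then show "a = a'"
      using weakly_progressive_leading_letter_unique[OF wp, of u "[]" "[]"] assms by simp
  qed
  then show ?thesis by (simp add: finite_UNIV_inj_surj)
qed

lemma weakly_progressive_extend:
  fixes d :: "'a::finite list \<Rightarrow> 'a"
  assumes wp: "weakly_progressive_of_order d n m" and m: "m \<ge> 1" and n: "n \<ge> 1"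
    and u: "length u = n - 1" and b: "d (u @ [b]) = c"
  shows "\<exists>a. d (u @ [a]) = c \<and> (\<exists>b'. d (tl (u @ [a]) @ [b']) = c')"
proof (cases "m = 1")
  case True
  have "length (tl (u @ [b])) = n - 1"
    using u by simp
  then have "surj (\<lambda>a. d (tl (u @ [b]) @ [a]))"
    by (rule weakly_progressive_order_1_surj[OF wp[unfolded True] n])
  then obtain b' where "c' = d (tl (u @ [b]) @ [b'])"
    by (blast dest: surjD)
  with b show ?thesis by blast
next
  case False
  then have m2: "m \<ge> 2" using m by simp
  define \<nu> where "\<nu> = c # c' # replicate (m - 2) c"
  have "length \<nu> = m" "\<nu> ! 0 = d (u @ [b])"
    using m2 b by (simp_all add: \<nu>_def)
  then have "\<exists>!a. \<exists>\<alpha>. length \<alpha> = m - 1 \<and> pmap d n m u (a # \<alpha>) = \<nu>"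
    using wp[unfolded weakly_progressive_of_order_def, rule_format, of "u @ [b]" \<nu>] n u by simp
  then obtain a \<alpha> where \<alpha>: "length \<alpha> = m - 1" and p: "pmap d n m u (a # \<alpha>) = \<nu>"
    by (blast dest: ex1_implies_ex)
  obtain a1 r where a1: "\<alpha> = a1 # r"
    using \<alpha> m2 by (cases \<alpha>) auto
  have "d (u @ [a]) = c"
    using p pmap_nth_0[OF m n u, of d a \<alpha>] by (simp add: \<nu>_def)
  moreover have "d (tl (u @ [a]) @ [a1]) = c'"
    using p pmap_nth_1[OF m2 n u, of d a a1 r] by (simp add: \<nu>_def a1)
  ultimately show ?thesis by blast
qed

lemma tau_cylinder_preimage_exists:
  assumes n: "n \<ge> 1" and w: "length w = n - 1" and "P 0 w"
    and step: "\<And>s u. length u = n - 1 \<Longrightarrow> P s u \<Longrightarrow> \<exists>a. d (u @ [a]) = y s \<and> P (Suc s) (tl (u @ [a]))"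
  shows "\<exists>x \<in> cylinder w. tau d n x = y"
proof -
  define next_letter where
    "next_letter s u = (SOME a. d (u @ [a]) = y s \<and> P (Suc s) (tl (u @ [a])))" for s u
  \<comment> \<open>window s will be the n - 1 letters of the preimage preceding position s + n - 1\<close>
  define window where "window = rec_nat w (\<lambda>s u. tl (u @ [next_letter s u]))"
  have window_Suc: "window (Suc s) = tl (window s @ [next_letter s (window s)])" for s
    by (simp add: window_def)
  have inv: "length (window s) = n - 1 \<and> P s (window s)" for s
  proof (induction s)
    case 0 then show ?case using w \<open>P 0 w\<close> by (simp add: window_def)
  next
    case (Suc s)
    then show ?case
      using someI_ex[OF step[of "window s" s]] n by (simp add: window_Suc next_letter_def)
  qed
  have next_letter: "d (window s @ [next_letter s (window s)]) = y s" for s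
    using someI_ex[OF step[of "window s" s]] inv by (simp add: next_letter_def)
  define x where
    "x k = (if k < n - 1 then w ! k else next_letter (k - (n - 1)) (window (k - (n - 1))))" for k
  have x_last: "x (s + n - 1) = next_letter s (window s)" for s
  proof -
    have "\<not> s + n - 1 < n - 1" "s + n - 1 - (n - 1) = s" using n by arith+
    then show ?thesis by (simp add: x_def)
  qed
  have window_x: "window s = map x [s..<s + n - 1]" for s
  proof (induction s)
    case 0 then show ?case using w by (auto simp: window_def x_def intro!: nth_equalityI)
  next
    case (Suc s)
    have "[s..<s + n] = [s..<s + n - 1] @ [s + n - 1]"
      using n upt_Suc_append[of s "s + n - 1"] by simp
    moreover have "window s @ [next_letter s (window s)] = map x [s..<s + n - 1] @ [x (s + n - 1)]"
      by (simp only: x_last, simp only: Suc)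
    ultimately have "window s @ [next_letter s (window s)] = map x [s..<s + n]"
      by (metis list.map(1,2) map_append)
    then show ?case by (simp add: window_Suc map_tl[symmetric] tl_upt)
  qed
  have "x \<in> cylinder w" using w by (simp add: cylinder_def x_def)
  moreover have "tau d n x = y"
  proof
    fix s
    have "tau d n x s = d (window s @ [x (s + n - 1)])"
      by (simp add: tau_eq_window[OF n] window_x)
    also have "\<dots> = y s"
      by (simp only: x_last next_letter)
    finally show "tau d n x s = y s" .
  qed
  ultimately show ?thesis by blast
qed

lemma map_cylinder_prefix:
  assumes "x \<in> cylinder w"
  shows "map x [0..<length w] = w"
  using assms by (auto simp: cylinder_def intro!: nth_equalityI)

lemma tau_image_cylinder_subset:
  assumes "n \<ge> 1" "length w = n - 1"
  shows "tau d n ` cylinder w \<subseteq> (\<Union>a. cylinder [d (w @ [a])])"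
proof (rule image_subsetI)
  fix x assume x: "x \<in> cylinder w"
  have "map x [0..<n - 1] = w"
    using map_cylinder_prefix[OF x] assms(2) by simp
  then have "tau d n x 0 = d (w @ [x (n - 1)])"
    using tau_eq_window[OF assms(1), of d x 0] by simp
  then have "tau d n x \<in> cylinder [d (w @ [x (n - 1)])]"
    by (simp add: cylinder_def)
  then show "tau d n x \<in> (\<Union>a. cylinder [d (w @ [a])])"
    by blast
qed

lemma weakly_progressive_inj_on_tau:
  assumes wp: "weakly_progressive_of_order d n m" and m: "m \<ge> 1" and n: "n \<ge> 1"
    and w: "length w = n - 1"
  shows "inj_on (tau d n) (cylinder w)"
proof (rule inj_onI)
  fix x x' assume x: "x \<in> cylinder w" and x': "x' \<in> cylinder w" and eq: "tau d n x = tau d n x'"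
  have "x k = x' k" for k
  proof (induction k rule: less_induct)
    case (less k)
    show ?case
    proof (cases "k < n - 1")
      case True
      then show ?thesis using x x' w by (simp add: cylinder_def)
    next
      case False
      define s where "s = k - (n - 1)"
      have k: "k = s + n - 1" using False n by (simp add: s_def)
      have split: "map z [s + n - 1..<s + n - 1 + m] = z k # map z [Suc k..<s + n - 1 + m]"
        for z :: "nat \<Rightarrow> 'a"
        using m k by (simp add: upt_conv_Cons)
      have window: "pmap d n m (map z [s..<s + n - 1]) (z k # map z [Suc k..<s + n - 1 + m])
                  = map (tau d n z) [s..<s + m]" for z
        using pmap_window_eq_tau[OF n, of d m z s] by (simp only: split)
      have same_window: "map x [s..<s + n - 1] = map x' [s..<s + n - 1]"
      proof (rule map_cong[OF refl])
        fix i assume "i \<in> set [s..<s + n - 1]"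
        then have "i < k" using k by simp
        then show "x i = x' i" by (rule less.IH)
      qed
      have "pmap d n m (map x [s..<s + n - 1]) (x k # map x [Suc k..<s + n - 1 + m])
          = map (tau d n x) [s..<s + m]"
        by (rule window)
      also have "\<dots> = pmap d n m (map x' [s..<s + n - 1]) (x' k # map x' [Suc k..<s + n - 1 + m])"
        unfolding eq by (rule window[symmetric])
      finally have same_pmap: "pmap d n m (map x' [s..<s + n - 1]) (x k # map x [Suc k..<s + n - 1 + m])
          = pmap d n m (map x' [s..<s + n - 1]) (x' k # map x' [Suc k..<s + n - 1 + m])"
        by (simp only: same_window)
      have tail_length: "length (map z [Suc k..<s + n - 1 + m]) = m - 1" for z :: "nat \<Rightarrow> 'a"
        using k by simp
      show ?thesis
        by (rule weakly_progressive_leading_letter_unique[OF wp m n _ tail_length tail_length same_pmap])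
          simp
    qed
  qed
  then show "x = x'" by blast
qed

theorem proposition3p10:
  fixes d :: "'a::finite list \<Rightarrow> 'a" and n :: nat and w :: "'a list"
  assumes "n \<ge> 1"
    and "length w = n - 1"
    and "weakly_progressive d n"
  shows "bij_betw (tau d n) (cylinder w) (\<Union>a. cylinder [d (w @ [a])])"
proof -
  obtain m where m: "m \<ge> 1" and wp: "weakly_progressive_of_order d n m"
    using assms(3) by (auto simp: weakly_progressive_def)
  have "y \<in> tau d n ` cylinder w" if "y \<in> (\<Union>a. cylinder [d (w @ [a])])" for y
  proof -
    from that obtain a where "d (w @ [a]) = y 0"
      by (auto simp: cylinder_def)
    then have "\<exists>x \<in> cylinder w. tau d n x = y"
    proof (intro tau_cylinder_preimage_exists[OF assms(1,2), where P = "\<lambda>s u. \<exists>b. d (u @ [b]) = y s"])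
      fix s u assume "length u = n - 1" "\<exists>b. d (u @ [b]) = y s"
      then show "\<exists>a. d (u @ [a]) = y s \<and> (\<exists>b. d (tl (u @ [a]) @ [b]) = y (Suc s))"
        using weakly_progressive_extend[OF wp m assms(1)] by blast
    qed blast
    then show ?thesis by blast
  qed
  then have "tau d n ` cylinder w = (\<Union>a. cylinder [d (w @ [a])])"
    using tau_image_cylinder_subset[OF assms(1,2), of d] by blast
  then show ?thesis
    using weakly_progressive_inj_on_tau[OF wp m assms(1,2)] by (simp add: bij_betw_def)
qed

end
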